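(* Let $u=p_1(t)e^{-|x-q_1(t)|}+p_2(t)e^{-|x-q_2(t)|}$ be a 2-peakon solution of the Camassa-Holm equation, i.e. $(q,p)$ solves $\dot q_i=\partial H/\partial p_i$, $\dot p_i=-\partial H/\partial q_i$, $H=\frac12\sum_{i,j=1}^2p_ip_je^{-|q_i-q_j|}$, with $q_1(0)>q_2(0)$ and energy $H_1:=p_1^2+p_2^2+2p_1p_2e^{-|q_1-q_2|}=c>0$. Then the two peakons collide (i.e. $q_1(t)-q_2(t)\to0$ at some finite time) if and only if the momentum $H_0=p_1+p_2$ satisfies $|H_0|<\sqrt c$ and $p_1-p_2<0$ at $t=0$. Equivalently, if and only if $p_1<0$ and $p_2>0$ at $t=0$. *)

theory Defs
  imports "HOL-Analysis.Analysis"
begin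

definition peakon_H :: "real \<Rightarrow> real \<Rightarrow> real \<Rightarrow> real \<Rightarrow> real" where
  "peakon_H q1 q2 p1 p2 =
     1/2 * (p1 * p1 * exp (- \<bar>q1 - q1\<bar>) + p1 * p2 * exp (- \<bar>q1 - q2\<bar>)
          + p2 * p1 * exp (- \<bar>q2 - q1\<bar>) + p2 * p2 * exp (- \<bar>q2 - q2\<bar>))"

definition peakon_H1 :: "real \<Rightarrow> real \<Rightarrow> real \<Rightarrow> real \<Rightarrow> real" where
  "peakon_H1 q1 q2 p1 p2 = p1\<^sup>2 + p2\<^sup>2 + 2 * p1 * p2 * exp (- \<bar>q1 - q2\<bar>)"

definition peakon_hamilton_sol ::
  "(real \<Rightarrow> real) \<Rightarrow> (real \<Rightarrow> real) \<Rightarrow> (real \<Rightarrow> real) \<Rightarrow> (real \<Rightarrow> real) \<Rightarrow> real set \<Rightarrow> bool" where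
  "peakon_hamilton_sol q1 q2 p1 p2 I \<longleftrightarrow>
     (\<forall>t\<in>I. \<exists>a1 a2 b1 b2.
        (q1 has_real_derivative a1) (at t within I) \<and>
        (q2 has_real_derivative a2) (at t within I) \<and>
        (p1 has_real_derivative b1) (at t within I) \<and>
        (p2 has_real_derivative b2) (at t within I) \<and>
        ((\<lambda>y. peakon_H (q1 t) (q2 t) y (p2 t)) has_real_derivative a1) (at (p1 t)) \<and>
        ((\<lambda>y. peakon_H (q1 t) (q2 t) (p1 t) y) has_real_derivative a2) (at (p2 t)) \<and>
        ((\<lambda>y. peakon_H y (q2 t) (p1 t) (p2 t)) has_real_derivative (- b1)) (at (q1 t)) \<and>
        ((\<lambda>y. peakon_H (q1 t) y (p1 t) (p2 t)) has_real_derivative (- b2)) (at (q2 t)))"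

definition peakons_collide :: "real \<Rightarrow> real \<Rightarrow> real \<Rightarrow> real \<Rightarrow> bool" where
  "peakons_collide x1 x2 m1 m2 \<longleftrightarrow>
     (\<exists>T>0. \<exists>q1 q2 p1 p2.
        peakon_hamilton_sol q1 q2 p1 p2 {0..<T} \<and>
        q1 0 = x1 \<and> q2 0 = x2 \<and> p1 0 = m1 \<and> p2 0 = m2 \<and>
        (\<forall>t\<in>{0..<T}. q1 t > q2 t) \<and>
        ((\<lambda>t. q1 t - q2 t) \<longlongrightarrow> 0) (at_left T))"

end

theory Submission
  imports Defs
begin

text \<open>
  As long as the peakons stay ordered, Hamilton's equations become an explicit ODE with two
  conserved quantities, the momentum \<open>p1 + p2\<close> and the interaction \<open>p1 p2 (1 - e^{q2 - q1})\<close>,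
  and the distance \<open>r = q1 - q2\<close> satisfies \<open>r' = (p1 - p2) (1 - e^{-r})\<close>.
  If \<open>p1 p2 \<ge> 0\<close>, conservation gives \<open>|p1 - p2| \<le> |p1 + p2|\<close>, so \<open>r' \<ge> -|p1 + p2| r\<close> and
  \<open>r\<close> stays above an exponential; if \<open>p1 > 0 > p2\<close>, the signs persist and \<open>r\<close> increases.
  If \<open>p1 < 0 < p2\<close>, the system can be integrated explicitly, and the explicit solution
  collides in finite time. Finally \<open>|p1 + p2| < \<surd>H\<^sub>1\<close> holds exactly when \<open>p1 p2 < 0\<close>.
\<close>

section \<open>Hamilton's equations for ordered peakons\<close>

definition peakon_ode ::
  "(real \<Rightarrow> real) \<Rightarrow> (real \<Rightarrow> real) \<Rightarrow> (real \<Rightarrow> real) \<Rightarrow> (real \<Rightarrow> real) \<Rightarrow> real set \<Rightarrow> bool" where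
  "peakon_ode q1 q2 p1 p2 I \<longleftrightarrow>
     (\<forall>t\<in>I.
        (q1 has_real_derivative p1 t + p2 t * exp (q2 t - q1 t)) (at t within I) \<and>
        (q2 has_real_derivative p2 t + p1 t * exp (q2 t - q1 t)) (at t within I) \<and>
        (p1 has_real_derivative p1 t * p2 t * exp (q2 t - q1 t)) (at t within I) \<and>
        (p2 has_real_derivative - (p1 t * p2 t * exp (q2 t - q1 t))) (at t within I))"

lemma peakon_H_ordered:
  "y < x \<Longrightarrow> peakon_H x y m n = (m\<^sup>2 + n\<^sup>2) / 2 + m * n * exp (y - x)"
  by (simp add: peakon_H_def abs_minus_commute power2_eq_square field_simps)

lemma peakon_H_partial_derivatives:
  assumes "y < x"
  shows "((\<lambda>z. peakon_H x y z n) has_real_derivative m + n * exp (y - x)) (at m)"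
    and "((\<lambda>z. peakon_H x y m z) has_real_derivative n + m * exp (y - x)) (at n)"
    and "((\<lambda>z. peakon_H z y m n) has_real_derivative - (m * n * exp (y - x))) (at x)"
    and "((\<lambda>z. peakon_H x z m n) has_real_derivative m * n * exp (y - x)) (at y)"
proof -
  show "((\<lambda>z. peakon_H x y z n) has_real_derivative m + n * exp (y - x)) (at m)"
    "((\<lambda>z. peakon_H x y m z) has_real_derivative n + m * exp (y - x)) (at n)"
    unfolding peakon_H_ordered[OF assms] by (auto intro!: derivative_eq_intros)
  show "((\<lambda>z. peakon_H z y m n) has_real_derivative - (m * n * exp (y - x))) (at x)"
  proof (rule has_field_derivative_transform_within_open[where S = "{y<..}"])
    show "((\<lambda>z. (m\<^sup>2 + n\<^sup>2) / 2 + m * n * exp (y - z)) has_real_derivative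
            - (m * n * exp (y - x))) (at x)"
      by (auto intro!: derivative_eq_intros)
  qed (use assms peakon_H_ordered in auto)
  show "((\<lambda>z. peakon_H x z m n) has_real_derivative m * n * exp (y - x)) (at y)"
  proof (rule has_field_derivative_transform_within_open[where S = "{..<x}"])
    show "((\<lambda>z. (m\<^sup>2 + n\<^sup>2) / 2 + m * n * exp (z - x)) has_real_derivative
            m * n * exp (y - x)) (at y)"
      by (auto intro!: derivative_eq_intros)
  qed (use assms peakon_H_ordered[of _ x] in auto)
qed

lemma peakon_odeD:
  assumes "peakon_ode q1 q2 p1 p2 I" "t \<in> I"
  shows "(q1 has_real_derivative p1 t + p2 t * exp (q2 t - q1 t)) (at t within I)"
    and "(q2 has_real_derivative p2 t + p1 t * exp (q2 t - q1 t)) (at t within I)"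
    and "(p1 has_real_derivative p1 t * p2 t * exp (q2 t - q1 t)) (at t within I)"
    and "(p2 has_real_derivative - (p1 t * p2 t * exp (q2 t - q1 t))) (at t within I)"
  using assms unfolding peakon_ode_def by auto

lemma peakon_hamilton_sol_imp_ode:
  assumes sol: "peakon_hamilton_sol q1 q2 p1 p2 I" and ordered: "\<forall>t\<in>I. q2 t < q1 t"
  shows "peakon_ode q1 q2 p1 p2 I"
  unfolding peakon_ode_def
proof
  fix t assume "t \<in> I"
  with sol obtain a1 a2 b1 b2 where
    "(q1 has_real_derivative a1) (at t within I)" "(q2 has_real_derivative a2) (at t within I)"
    "(p1 has_real_derivative b1) (at t within I)" "(p2 has_real_derivative b2) (at t within I)"
    and H: "((\<lambda>y. peakon_H (q1 t) (q2 t) y (p2 t)) has_real_derivative a1) (at (p1 t))"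
      "((\<lambda>y. peakon_H (q1 t) (q2 t) (p1 t) y) has_real_derivative a2) (at (p2 t))"
      "((\<lambda>y. peakon_H y (q2 t) (p1 t) (p2 t)) has_real_derivative (- b1)) (at (q1 t))"
      "((\<lambda>y. peakon_H (q1 t) y (p1 t) (p2 t)) has_real_derivative (- b2)) (at (q2 t))"
    unfolding peakon_hamilton_sol_def by blast
  moreover have "q2 t < q1 t"
    using ordered \<open>t \<in> I\<close> by blast
  note H' = peakon_H_partial_derivatives[OF this]
  have "a1 = p1 t + p2 t * exp (q2 t - q1 t)" "a2 = p2 t + p1 t * exp (q2 t - q1 t)"
    "b1 = p1 t * p2 t * exp (q2 t - q1 t)" "b2 = - (p1 t * p2 t * exp (q2 t - q1 t))"
    using DERIV_unique[OF H(1) H'(1)] DERIV_unique[OF H(2) H'(2)]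
      DERIV_unique[OF H(3) H'(3)] DERIV_unique[OF H(4) H'(4)] by simp_all
  ultimately show
    "(q1 has_real_derivative p1 t + p2 t * exp (q2 t - q1 t)) (at t within I) \<and>
     (q2 has_real_derivative p2 t + p1 t * exp (q2 t - q1 t)) (at t within I) \<and>
     (p1 has_real_derivative p1 t * p2 t * exp (q2 t - q1 t)) (at t within I) \<and>
     (p2 has_real_derivative - (p1 t * p2 t * exp (q2 t - q1 t))) (at t within I)"
    by simp
qed

lemma peakon_ode_imp_hamilton_sol:
  assumes ode: "peakon_ode q1 q2 p1 p2 I" and ordered: "\<forall>t\<in>I. q2 t < q1 t"
  shows "peakon_hamilton_sol q1 q2 p1 p2 I"
  unfolding peakon_hamilton_sol_def
proof
  fix t assume "t \<in> I"
  have "q2 t < q1 t"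
    using ordered \<open>t \<in> I\<close> by blast
  show "\<exists>a1 a2 b1 b2.
      (q1 has_real_derivative a1) (at t within I) \<and>
      (q2 has_real_derivative a2) (at t within I) \<and>
      (p1 has_real_derivative b1) (at t within I) \<and>
      (p2 has_real_derivative b2) (at t within I) \<and>
      ((\<lambda>y. peakon_H (q1 t) (q2 t) y (p2 t)) has_real_derivative a1) (at (p1 t)) \<and>
      ((\<lambda>y. peakon_H (q1 t) (q2 t) (p1 t) y) has_real_derivative a2) (at (p2 t)) \<and>
      ((\<lambda>y. peakon_H y (q2 t) (p1 t) (p2 t)) has_real_derivative (- b1)) (at (q1 t)) \<and>
      ((\<lambda>y. peakon_H (q1 t) y (p1 t) (p2 t)) has_real_derivative (- b2)) (at (q2 t))"
    by (rule exI[of _ "p1 t + p2 t * exp (q2 t - q1 t)"], rule exI[of _ "p2 t + p1 t * exp (q2 t - q1 t)"],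
        rule exI[of _ "p1 t * p2 t * exp (q2 t - q1 t)"], rule exI[of _ "- (p1 t * p2 t * exp (q2 t - q1 t))"])
      (use peakon_odeD[OF ode \<open>t \<in> I\<close>] peakon_H_partial_derivatives[OF \<open>q2 t < q1 t\<close>] in simp)
qed

lemma peakon_ode_momentum_conserved:
  assumes ode: "peakon_ode q1 q2 p1 p2 I" and "convex I" "s \<in> I" "t \<in> I"
  shows "p1 t + p2 t = p1 s + p2 s"
proof -
  have "\<exists>c. \<forall>t\<in>I. p1 t + p2 t = c"
    using \<open>convex I\<close>
  proof (rule has_field_derivative_zero_constant)
    fix t assume "t \<in> I"
    show "((\<lambda>t. p1 t + p2 t) has_real_derivative 0) (at t within I)"
      using peakon_odeD(3,4)[OF ode \<open>t \<in> I\<close>] by (auto intro!: derivative_eq_intros)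
  qed
  with assms(3,4) show ?thesis by metis
qed

lemma peakon_ode_interaction_conserved:
  assumes ode: "peakon_ode q1 q2 p1 p2 I" and "convex I" "s \<in> I" "t \<in> I"
  shows "p1 t * p2 t * (1 - exp (q2 t - q1 t)) = p1 s * p2 s * (1 - exp (q2 s - q1 s))"
proof -
  have "\<exists>c. \<forall>t\<in>I. p1 t * p2 t * (1 - exp (q2 t - q1 t)) = c"
    using \<open>convex I\<close>
  proof (rule has_field_derivative_zero_constant)
    fix t assume "t \<in> I"
    show "((\<lambda>t. p1 t * p2 t * (1 - exp (q2 t - q1 t))) has_real_derivative 0) (at t within I)"
      using peakon_odeD[OF ode \<open>t \<in> I\<close>]
      by (auto intro!: derivative_eq_intros simp: algebra_simps)
  qed
  with assms(3,4) show ?thesis by metis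
qed

lemma peakon_ode_sgn_momentum_product:
  assumes "peakon_ode q1 q2 p1 p2 I" "convex I" "s \<in> I" "t \<in> I" and ordered: "\<forall>t\<in>I. q2 t < q1 t"
  shows "sgn (p1 t * p2 t) = sgn (p1 s * p2 s)"
proof -
  have "sgn (1 - exp (q2 u - q1 u)) = 1" if "u \<in> I" for u
    using ordered that by simp
  then show ?thesis
    using arg_cong[OF peakon_ode_interaction_conserved[OF assms(1-4)], of sgn] assms(3,4)
    by (simp add: sgn_mult)
qed

lemma peakon_ode_distance_derivative:
  assumes "peakon_ode q1 q2 p1 p2 I" "t \<in> I"
  shows "((\<lambda>t. q1 t - q2 t) has_real_derivative (p1 t - p2 t) * (1 - exp (q2 t - q1 t)))
           (at t within I)"
  using peakon_odeD(1,2)[OF assms] by (auto intro!: derivative_eq_intros simp: algebra_simps)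

section \<open>Absence of collisions\<close>

lemma derivative_ge_imp_exp_lower_bound:
  fixes r r' :: "real \<Rightarrow> real"
  assumes deriv: "\<And>t. t \<in> {a..<b} \<Longrightarrow> (r has_real_derivative r' t) (at t within {a..<b})"
    and bound: "\<And>t. t \<in> {a..<b} \<Longrightarrow> - C * r t \<le> r' t"
    and t: "t \<in> {a..<b}"
  shows "r a * exp (- C * (t - a)) \<le> r t"
proof -
  define f where "f x = r x * exp (C * (x - a))" for x
  have f_deriv: "(f has_real_derivative (r' x + C * r x) * exp (C * (x - a))) (at x within {a..<b})"
    if "x \<in> {a..<b}" for x
    unfolding f_def using deriv[OF that] by (auto intro!: derivative_eq_intros simp: algebra_simps)
  have "f a \<le> f t"
  proof (rule DERIV_nonneg_imp_increasing_open[where f = f])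
    show "a \<le> t" using t by simp
    show "\<exists>y. (f has_real_derivative y) (at x) \<and> 0 \<le> y" if "a < x" "x < t" for x
    proof (intro exI conjI)
      have "x \<in> {a..<b}" "at x within {a..<b} = at x"
        using that t by (auto intro: at_within_open_subset[where S = "{a<..<b}"])
      with f_deriv show "(f has_real_derivative (r' x + C * r x) * exp (C * (x - a))) (at x)"
        by metis
      show "0 \<le> (r' x + C * r x) * exp (C * (x - a))"
        using bound[of x] that t by simp
    qed
    have "continuous_on {a..<b} f"
      using f_deriv DERIV_continuous continuous_on_eq_continuous_within by blast
    then show "continuous_on {a..t} f"
      by (rule continuous_on_subset) (use t in auto)
  qed
  then have "r a * exp (- C * (t - a)) \<le> r t * exp (C * (t - a)) * exp (- C * (t - a))"
    by (intro mult_right_mono) (simp_all add: f_def)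
  then show ?thesis
    by (simp add: mult.assoc flip: exp_add)
qed

lemma derivative_ge_imp_not_tendsto_zero:
  fixes r r' :: "real \<Rightarrow> real"
  assumes "a < b"
    and deriv: "\<And>t. t \<in> {a..<b} \<Longrightarrow> (r has_real_derivative r' t) (at t within {a..<b})"
    and bound: "\<And>t. t \<in> {a..<b} \<Longrightarrow> - C * r t \<le> r' t"
    and "0 \<le> C" "0 < r a"
  shows "\<not> (r \<longlongrightarrow> 0) (at_left b)"
proof
  assume lim: "(r \<longlongrightarrow> 0) (at_left b)"
  have lower: "r a * exp (- C * (b - a)) \<le> r t" if "t \<in> {a..<b}" for t
  proof -
    have "r a * exp (- C * (b - a)) \<le> r a * exp (- C * (t - a))"
      using that \<open>0 \<le> C\<close> \<open>0 < r a\<close> by (auto intro!: mult_left_mono mult_right_mono)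
    also have "\<dots> \<le> r t"
      using deriv bound that by (rule derivative_ge_imp_exp_lower_bound)
    finally show ?thesis .
  qed
  have "eventually (\<lambda>t. r a * exp (- C * (b - a)) \<le> r t) (at_left b)"
    using eventually_at_left_real[OF \<open>a < b\<close>] by eventually_elim (rule lower, simp)
  with lim have "r a * exp (- C * (b - a)) \<le> 0"
    using trivial_limit_at_left_real by (rule tendsto_lowerbound)
  with \<open>0 < r a\<close> show False
    by (simp add: mult_le_0_iff)
qed

lemma peakon_ode_no_collision:
  assumes ode: "peakon_ode q1 q2 p1 p2 {0..<T}" and "0 < T"
    and ordered: "\<forall>t\<in>{0..<T}. q2 t < q1 t" and "0 \<le> C"
    and rate: "\<And>t. t \<in> {0..<T} \<Longrightarrow> - C * (q1 t - q2 t) \<le> (p1 t - p2 t) * (1 - exp (q2 t - q1 t))"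
  shows "\<not> ((\<lambda>t. q1 t - q2 t) \<longlongrightarrow> 0) (at_left T)"
  using \<open>0 < T\<close> peakon_ode_distance_derivative[OF ode] rate \<open>0 \<le> C\<close>
  by (rule derivative_ge_imp_not_tendsto_zero) (use ordered \<open>0 < T\<close> in auto)

lemma peakon_ode_same_sign_no_collision:
  assumes ode: "peakon_ode q1 q2 p1 p2 {0..<T}" and "0 < T"
    and ordered: "\<forall>t\<in>{0..<T}. q2 t < q1 t" and "0 \<le> p1 0 * p2 0"
  shows "\<not> ((\<lambda>t. q1 t - q2 t) \<longlongrightarrow> 0) (at_left T)"
proof (rule peakon_ode_no_collision[OF ode \<open>0 < T\<close> ordered abs_ge_zero])
  fix t assume t: "t \<in> {0..<T}"
  have "0 \<in> {0..<T}" using \<open>0 < T\<close> by simp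
  have "0 \<le> sgn (p1 t * p2 t)"
    using peakon_ode_sgn_momentum_product[OF ode _ \<open>0 \<in> {0..<T}\<close> t ordered] \<open>0 \<le> p1 0 * p2 0\<close>
    by simp
  then have "(p1 t - p2 t)\<^sup>2 \<le> (p1 t + p2 t)\<^sup>2"
    by (simp add: power2_eq_square algebra_simps)
  then have momenta: "- \<bar>p1 0 + p2 0\<bar> \<le> p1 t - p2 t"
    using peakon_ode_momentum_conserved[OF ode _ \<open>0 \<in> {0..<T}\<close> t]
    by (auto simp flip: abs_le_square_iff)
  have "q2 t < q1 t"
    using ordered t by blast
  then have gap: "0 \<le> 1 - exp (q2 t - q1 t)"
    by simp
  have "- \<bar>p1 0 + p2 0\<bar> * (q1 t - q2 t) \<le> - \<bar>p1 0 + p2 0\<bar> * (1 - exp (q2 t - q1 t))"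
    by (rule mult_left_mono_neg) (use exp_ge_add_one_self[of "q2 t - q1 t"] in linarith, simp)
  also have "\<dots> \<le> (p1 t - p2 t) * (1 - exp (q2 t - q1 t))"
    using momenta gap by (rule mult_right_mono)
  finally show "- \<bar>p1 0 + p2 0\<bar> * (q1 t - q2 t) \<le> (p1 t - p2 t) * (1 - exp (q2 t - q1 t))" .
qed

lemma peakon_ode_opposite_sign_no_collision:
  assumes ode: "peakon_ode q1 q2 p1 p2 {0..<T}" and "0 < T"
    and ordered: "\<forall>t\<in>{0..<T}. q2 t < q1 t" and "0 < p1 0" "p2 0 < 0"
  shows "\<not> ((\<lambda>t. q1 t - q2 t) \<longlongrightarrow> 0) (at_left T)"
proof (rule peakon_ode_no_collision[OF ode \<open>0 < T\<close> ordered order.refl])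
  fix t assume t: "t \<in> {0..<T}"
  have "0 \<in> {0..<T}" using \<open>0 < T\<close> by simp
  have opposite: "p1 u * p2 u < 0" if "u \<in> {0..<T}" for u
    using peakon_ode_sgn_momentum_product[OF ode _ \<open>0 \<in> {0..<T}\<close> that ordered]
      \<open>0 < p1 0\<close> \<open>p2 0 < 0\<close> by (simp add: mult_pos_neg sgn_1_neg)
  have "0 < p1 t"
  proof (rule ccontr)
    assume "\<not> 0 < p1 t"
    moreover have "continuous_on {0..<T} p1"
      using peakon_odeD(3)[OF ode] DERIV_continuous continuous_on_eq_continuous_within by blast
    then have "continuous_on {0..t} p1"
      by (rule continuous_on_subset) (use t in auto)
    ultimately obtain u where "0 \<le> u" "u \<le> t" "p1 u = 0"
      using IVT2'[of p1 t 0 0] \<open>0 < p1 0\<close> t by auto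
    with opposite[of u] t show False by simp
  qed
  with opposite[OF t] have "0 < p1 t - p2 t"
    by (simp add: mult_less_0_iff)
  moreover have "q2 t < q1 t"
    using ordered t by blast
  ultimately show "- 0 * (q1 t - q2 t) \<le> (p1 t - p2 t) * (1 - exp (q2 t - q1 t))"
    by simp
qed

section \<open>Explicit colliding solutions\<close>

lemma peakon_explicit_field_identities:
  fixes A B x :: real
  assumes "A + B * x \<noteq> 0" "B + A * x \<noteq> 0" "x \<noteq> 1"
  defines "p1 \<equiv> - (A + B * x) / (2 * (1 - x))" and "p2 \<equiv> (B + A * x) / (2 * (1 - x))"
    and "e \<equiv> (A + B)\<^sup>2 * x / ((A + B * x) * (B + A * x))"
  shows "p1 + p2 * e = (B\<^sup>2 * x - A\<^sup>2) / (2 * (A + B * x))"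
    and "p2 + p1 * e = (B\<^sup>2 - A\<^sup>2 * x) / (2 * (B + A * x))"
    and "p1 * p2 * e = - ((A + B)\<^sup>2 * x / (4 * (1 - x)\<^sup>2))"
proof -
  have "1 - x \<noteq> 0" using assms(3) by simp
  then show "p1 + p2 * e = (B\<^sup>2 * x - A\<^sup>2) / (2 * (A + B * x))"
    "p2 + p1 * e = (B\<^sup>2 - A\<^sup>2 * x) / (2 * (B + A * x))"
    "p1 * p2 * e = - ((A + B)\<^sup>2 * x / (4 * (1 - x)\<^sup>2))"
    using assms(1,2) unfolding p1_def p2_def e_def
    by (simp_all add: divide_simps) (simp_all add: algebra_simps power2_eq_square)
qed

locale peakon_explicit =
  fixes A B g0 c :: real
  assumes A_pos: "0 < A" and B_pos: "0 < B" and g0_pos: "0 < g0" and g0_less_1: "g0 < 1"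
begin

definition g :: "real \<Rightarrow> real" where "g = (\<lambda>t. g0 * exp ((A + B) / 2 * t))"
definition P1 :: "real \<Rightarrow> real" where "P1 = (\<lambda>t. - (A + B * g t) / (2 * (1 - g t)))"
definition P2 :: "real \<Rightarrow> real" where "P2 = (\<lambda>t. (B + A * g t) / (2 * (1 - g t)))"
definition Q1 :: "real \<Rightarrow> real" where "Q1 = (\<lambda>t. c - A * t / 2 + ln (A + B * g t))"
definition Q2 :: "real \<Rightarrow> real" where
  "Q2 = (\<lambda>t. c + ln ((A + B)\<^sup>2 * g0) + B * t / 2 - ln (B + A * g t))"
definition collision_time :: real where "collision_time = - ln g0 / ((A + B) / 2)"

text \<open>
  With \<open>\<alpha> = (A + B) / 2\<close>, the momentum of this solution is \<open>(B - A) / 2\<close> and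
  \<open>p2 - p1 = \<alpha> (1 + g) / (1 - g)\<close>; the peakons collide when \<open>g\<close> reaches \<open>1\<close>.
\<close>

lemma denominators_pos: "0 < A + B * g t" "0 < B + A * g t"
  using A_pos B_pos g0_pos by (simp_all add: g_def add_pos_pos)

lemma exp_distance: "exp (Q2 t - Q1 t) = (A + B)\<^sup>2 * g t / ((A + B * g t) * (B + A * g t))"
proof -
  have "Q2 t - Q1 t = ln ((A + B)\<^sup>2 * g0) + (A + B) / 2 * t - ln (A + B * g t) - ln (B + A * g t)"
    unfolding Q1_def Q2_def by (simp add: algebra_simps)
  then show ?thesis
    using A_pos B_pos g0_pos denominators_pos by (simp add: exp_diff exp_add g_def)
qed

lemma g_collision_time: "g collision_time = 1"
  using A_pos B_pos g0_pos by (simp add: g_def collision_time_def exp_minus)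

lemma g_less_1_iff: "g t < 1 \<longleftrightarrow> t < collision_time"
proof -
  have "g t < g collision_time \<longleftrightarrow> t < collision_time"
    using A_pos B_pos g0_pos by (simp add: g_def)
  then show ?thesis
    using g_collision_time by simp
qed

lemma collision_time_pos: "0 < collision_time"
  using A_pos B_pos g0_pos g0_less_1 by (simp add: collision_time_def divide_neg_pos)

lemma Q2_less_Q1: "g t < 1 \<Longrightarrow> Q2 t < Q1 t"
proof -
  assume "g t < 1"
  have "(A + B * g t) * (B + A * g t) - (A + B)\<^sup>2 * g t = A * B * (1 - g t)\<^sup>2"
    by (simp add: power2_eq_square algebra_simps)
  moreover have "0 < A * B * (1 - g t)\<^sup>2"
    using A_pos B_pos \<open>g t < 1\<close> by simp
  ultimately have "exp (Q2 t - Q1 t) < 1"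
    using exp_distance denominators_pos by simp
  then show ?thesis
    by simp
qed

lemma has_derivatives:
  assumes "g t < 1"
  shows "(Q1 has_real_derivative P1 t + P2 t * exp (Q2 t - Q1 t)) (at t)"
    and "(Q2 has_real_derivative P2 t + P1 t * exp (Q2 t - Q1 t)) (at t)"
    and "(P1 has_real_derivative P1 t * P2 t * exp (Q2 t - Q1 t)) (at t)"
    and "(P2 has_real_derivative - (P1 t * P2 t * exp (Q2 t - Q1 t))) (at t)"
proof -
  have nz: "A + B * g t \<noteq> 0" "B + A * g t \<noteq> 0" "g t \<noteq> 1"
    using denominators_pos[of t] assms by auto
  have g_deriv: "(g has_real_derivative (A + B) / 2 * g t) (at t)"
    unfolding g_def by (auto intro!: derivative_eq_intros)
  have field: "P1 t + P2 t * exp (Q2 t - Q1 t) = (B\<^sup>2 * g t - A\<^sup>2) / (2 * (A + B * g t))"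
    "P2 t + P1 t * exp (Q2 t - Q1 t) = (B\<^sup>2 - A\<^sup>2 * g t) / (2 * (B + A * g t))"
    "P1 t * P2 t * exp (Q2 t - Q1 t) = - ((A + B)\<^sup>2 * g t / (4 * (1 - g t)\<^sup>2))"
    unfolding P1_def P2_def exp_distance by (fact peakon_explicit_field_identities[OF nz])+
  show "(Q1 has_real_derivative P1 t + P2 t * exp (Q2 t - Q1 t)) (at t)"
    unfolding field(1) unfolding Q1_def using denominators_pos[of t]
    by (auto intro!: derivative_eq_intros g_deriv) (simp add: field_simps power2_eq_square)
  show "(Q2 has_real_derivative P2 t + P1 t * exp (Q2 t - Q1 t)) (at t)"
    unfolding field(2) unfolding Q2_def using denominators_pos[of t]
    by (auto intro!: derivative_eq_intros g_deriv) (simp add: field_simps power2_eq_square)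
  show "(P1 has_real_derivative P1 t * P2 t * exp (Q2 t - Q1 t)) (at t)"
    unfolding field(3) unfolding P1_def using nz
    by (auto intro!: derivative_eq_intros g_deriv) (simp add: divide_simps power2_eq_square algebra_simps)
  show "(P2 has_real_derivative - (P1 t * P2 t * exp (Q2 t - Q1 t))) (at t)"
    unfolding field(3) minus_minus unfolding P2_def using nz
    by (auto intro!: derivative_eq_intros g_deriv) (simp add: divide_simps power2_eq_square algebra_simps)
qed

lemma ordered_before_collision: "\<forall>t\<in>{0..<collision_time}. Q2 t < Q1 t"
  using Q2_less_Q1 g_less_1_iff by simp

lemma hamilton_sol: "peakon_hamilton_sol Q1 Q2 P1 P2 {0..<collision_time}"
proof (rule peakon_ode_imp_hamilton_sol[OF _ ordered_before_collision])
  show "peakon_ode Q1 Q2 P1 P2 {0..<collision_time}"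
    unfolding peakon_ode_def
    using has_derivatives g_less_1_iff by (simp add: has_field_derivative_at_within)
qed

lemma distance_tendsto_zero: "((\<lambda>t. Q1 t - Q2 t) \<longlongrightarrow> 0) (at_left collision_time)"
proof -
  have "isCont (\<lambda>t. Q1 t - Q2 t) collision_time"
    unfolding Q1_def Q2_def g_def using denominators_pos[of collision_time]
    by (auto simp: g_def intro!: continuous_intros)
  moreover have "exp (Q2 collision_time - Q1 collision_time) = 1"
    using exp_distance g_collision_time A_pos B_pos by (simp add: power2_eq_square add.commute)
  ultimately show ?thesis
    by (auto simp: isCont_def intro: tendsto_within_subset)
qed

end

lemma peakon_explicit_parameters:
  fixes m1 m2 E :: real
  assumes "m1 < 0" "0 < m2" "0 < E" "E < 1"
  obtains A B g0 where "0 < A" "0 < B" "0 < g0" "g0 < 1"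
    and "- (A + B * g0) / (2 * (1 - g0)) = m1" "(B + A * g0) / (2 * (1 - g0)) = m2"
    and "(A + B)\<^sup>2 * g0 / ((A + B * g0) * (B + A * g0)) = E"
proof -
  define P where "P = m1 + m2"
  define v where "v = m2 - m1"
  define k where "k = - 4 * m1 * m2 * (1 - E)"
  define \<alpha> where "\<alpha> = sqrt (P\<^sup>2 + k)"
  \<comment> \<open>By the conservation laws, \<open>\<alpha>\<close> is the value of \<open>p2 - p1\<close> at infinite separation, and \<open>g0\<close>
    below solves \<open>m2 - m1 = \<alpha> (1 + g0) / (1 - g0)\<close>.\<close>
  have "0 < k" "0 < v"
    using assms by (simp_all add: k_def v_def mult_neg_pos mult_pos_pos)
  then have \<alpha>_sq: "\<alpha> * \<alpha> = P\<^sup>2 + k" and "\<bar>P\<bar> < \<alpha>"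
    unfolding \<alpha>_def by (simp_all add: real_less_rsqrt add_nonneg_pos)
  then have "0 < \<alpha>"
    by linarith
  have product: "(v - \<alpha>) * (v + \<alpha>) = - 4 * m1 * m2 * E"
    using \<alpha>_sq unfolding v_def P_def k_def by (simp add: power2_eq_square algebra_simps)
  moreover have "0 < - 4 * m1 * m2 * E"
    using assms by (simp add: mult_neg_pos mult_pos_pos)
  ultimately have "0 < (v - \<alpha>) * (v + \<alpha>)"
    by simp
  then have "\<alpha> < v"
    using \<open>0 < v\<close> \<open>0 < \<alpha>\<close> by (auto simp: zero_less_mult_iff)
  have "v + \<alpha> \<noteq> 0"
    using \<open>0 < v\<close> \<open>0 < \<alpha>\<close> by simp
  define A where "A = \<alpha> - P"
  define B where "B = \<alpha> + P"
  define g0 where "g0 = (v - \<alpha>) / (v + \<alpha>)"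
  have "0 < A" "0 < B" "0 < g0" "g0 < 1"
    using \<open>\<bar>P\<bar> < \<alpha>\<close> \<open>\<alpha> < v\<close> \<open>0 < \<alpha>\<close> by (auto simp: A_def B_def g0_def field_simps)
  have data: "A + B * g0 = - 4 * \<alpha> * m1 / (v + \<alpha>)" "B + A * g0 = 4 * \<alpha> * m2 / (v + \<alpha>)"
      "1 - g0 = 2 * \<alpha> / (v + \<alpha>)" "A + B = 2 * \<alpha>"
    using \<open>0 < \<alpha>\<close> \<open>0 < v\<close> by (auto simp: A_def B_def g0_def P_def v_def field_simps)
  have "- (A + B * g0) = m1 * (2 * (1 - g0))" "B + A * g0 = m2 * (2 * (1 - g0))"
    unfolding data using \<open>v + \<alpha> \<noteq> 0\<close> by (simp_all add: field_simps)
  then have "- (A + B * g0) / (2 * (1 - g0)) = m1" "(B + A * g0) / (2 * (1 - g0)) = m2"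
    using \<open>g0 < 1\<close> by simp_all
  moreover have "(A + B)\<^sup>2 * g0 / ((A + B * g0) * (B + A * g0)) = E"
  proof -
    have numerator: "(A + B)\<^sup>2 * g0 = 4 * \<alpha>\<^sup>2 * (v - \<alpha>) / (v + \<alpha>)"
      unfolding data(4) g0_def by (simp add: power2_eq_square)
    have denominator: "(A + B * g0) * (B + A * g0) = - 16 * \<alpha>\<^sup>2 * m1 * m2 / (v + \<alpha>)\<^sup>2"
      unfolding data(1,2) by (simp add: field_simps power2_eq_square)
    have "(A + B)\<^sup>2 * g0 / ((A + B * g0) * (B + A * g0)) = (v - \<alpha>) * (v + \<alpha>) / (- 4 * m1 * m2)"
      unfolding numerator denominator using \<open>0 < \<alpha>\<close> \<open>v + \<alpha> \<noteq> 0\<close> assms(1,2)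
      by (simp add: divide_simps power2_eq_square)
    then show ?thesis
      unfolding product using assms(1,2) by simp
  qed
  ultimately show ?thesis
    using that \<open>0 < A\<close> \<open>0 < B\<close> \<open>0 < g0\<close> \<open>g0 < 1\<close> by blast
qed

section \<open>The collision criterion\<close>

lemma peakons_collide_imp_opposite_momenta:
  assumes "peakons_collide x1 x2 m1 m2"
  shows "m1 < 0 \<and> 0 < m2"
proof -
  obtain T q1 q2 p1 p2 where "0 < T" and sol: "peakon_hamilton_sol q1 q2 p1 p2 {0..<T}"
    and init: "p1 0 = m1" "p2 0 = m2" and ordered: "\<forall>t\<in>{0..<T}. q2 t < q1 t"
    and lim: "((\<lambda>t. q1 t - q2 t) \<longlongrightarrow> 0) (at_left T)"
    using assms unfolding peakons_collide_def by blast
  have ode: "peakon_ode q1 q2 p1 p2 {0..<T}"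
    using sol ordered by (rule peakon_hamilton_sol_imp_ode)
  have "\<not> 0 \<le> m1 * m2"
    using peakon_ode_same_sign_no_collision[OF ode \<open>0 < T\<close> ordered] lim init by auto
  moreover have "\<not> (0 < m1 \<and> m2 < 0)"
    using peakon_ode_opposite_sign_no_collision[OF ode \<open>0 < T\<close> ordered] lim init by auto
  ultimately show ?thesis
    by (auto simp: zero_le_mult_iff)
qed

lemma peakons_collide_if_opposite_momenta:
  assumes "x2 < x1" "m1 < 0" "0 < m2"
  shows "peakons_collide x1 x2 m1 m2"
proof -
  have "0 < exp (x2 - x1)" "exp (x2 - x1) < 1"
    using assms(1) by simp_all
  with assms(2,3) obtain A B g0 where params: "0 < A" "0 < B" "0 < g0" "g0 < 1"
    and init_p: "- (A + B * g0) / (2 * (1 - g0)) = m1" "(B + A * g0) / (2 * (1 - g0)) = m2"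
    and init_exp: "(A + B)\<^sup>2 * g0 / ((A + B * g0) * (B + A * g0)) = exp (x2 - x1)"
    by (rule peakon_explicit_parameters)
  interpret peakon_explicit A B g0 "x1 - ln (A + B * g0)"
    using params by unfold_locales
  have "P1 0 = m1" "P2 0 = m2" "Q1 0 = x1"
    using init_p by (simp_all add: P1_def P2_def Q1_def g_def)
  moreover have "Q2 0 = x2"
    using exp_distance[of 0] init_exp \<open>Q1 0 = x1\<close> by (simp add: g_def)
  ultimately show ?thesis
    unfolding peakons_collide_def
    using collision_time_pos hamilton_sol ordered_before_collision distance_tendsto_zero by blast
qed

lemma peakon_H1_eq_momentum_sq:
  "peakon_H1 x1 x2 m1 m2 = (m1 + m2)\<^sup>2 - 2 * m1 * m2 * (1 - exp (- \<bar>x1 - x2\<bar>))"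
  by (simp add: peakon_H1_def power2_eq_square algebra_simps)

lemma peakon_momentum_less_sqrt_H1_iff:
  assumes "x1 \<noteq> x2"
  shows "\<bar>m1 + m2\<bar> < sqrt (peakon_H1 x1 x2 m1 m2) \<longleftrightarrow> m1 * m2 < 0"
proof -
  have "0 < 1 - exp (- \<bar>x1 - x2\<bar>)"
    using assms by simp
  then have "(m1 + m2)\<^sup>2 < peakon_H1 x1 x2 m1 m2 \<longleftrightarrow> m1 * m2 < 0"
    unfolding peakon_H1_eq_momentum_sq by (simp add: mult_less_0_iff)
  then show ?thesis
    by (metis real_sqrt_abs real_sqrt_less_iff)
qed

theorem theorem3:
  fixes x1 x2 m1 m2 c :: real
  assumes "x1 > x2"
    and "c > 0"
    and "peakon_H1 x1 x2 m1 m2 = c"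
  shows "(peakons_collide x1 x2 m1 m2 \<longleftrightarrow> \<bar>m1 + m2\<bar> < sqrt c \<and> m1 - m2 < 0)
       \<and> (peakons_collide x1 x2 m1 m2 \<longleftrightarrow> m1 < 0 \<and> m2 > 0)"
proof -
  have collide: "peakons_collide x1 x2 m1 m2 \<longleftrightarrow> m1 < 0 \<and> m2 > 0"
    using peakons_collide_imp_opposite_momenta peakons_collide_if_opposite_momenta assms(1) by blast
  have "\<bar>m1 + m2\<bar> < sqrt c \<longleftrightarrow> m1 * m2 < 0"
    using peakon_momentum_less_sqrt_H1_iff[of x1 x2 m1 m2] assms(1,3) by simp
  then have "\<bar>m1 + m2\<bar> < sqrt c \<and> m1 - m2 < 0 \<longleftrightarrow> m1 < 0 \<and> m2 > 0"
    by (auto simp: mult_less_0_iff)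
  with collide show ?thesis
    by blast
qed

end
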